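(* Let $M$ be a finitely generated $\mathbb{N}^n$-graded $S$-module generated in squarefree degrees, with minimal $\mathbb{N}^n$-graded free resolution $0\leftarrow M\leftarrow F_0\leftarrow F_1\leftarrow\cdots\leftarrow F_r\leftarrow0$. Then $F_1$ is generated in squarefree degrees if and only if $F_i$ is generated in squarefree degrees for all $i=0,\dots,r$.
   Context: $S=\mathbb{k}[x_1,\dots,x_n]$ with fine $\mathbb{N}^n$-grading. A degree in $\mathbb{N}^n$ is squarefree if all its entries lie in $\{0,1\}$; a graded module is generated in squarefree degrees if it has a homogeneous generating set all of whose degrees are squarefree. *)

theory Defs
  imports Main "HOL.Vector_Spaces" "HOL-Library.Function_Algebras"
begin

text \<open>Multidegrees in N^n are functions 'n => nat for a finite index type 'n
  (the variables x_j, j :: 'n).  The order on degrees is the pointwise order.\<close>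

definition squarefree_deg :: "('n \<Rightarrow> nat) \<Rightarrow> bool" where
  "squarefree_deg a \<longleftrightarrow> (\<forall>j. a j \<le> 1)"

text \<open>A fine N^n-graded S-module, S = k[x_j], over the field k, given by its graded
  components C a (k-subspaces of an ambient k-vector space; the module is their
  external direct sum) and the action of monomials: act c a is multiplication by x^c,
  a k-linear map C a -> C (a + c), with x^0 = id and x^c' x^c = x^(c+c').\<close>

definition graded_module ::
  "('k::field \<Rightarrow> 'v::ab_group_add \<Rightarrow> 'v) \<Rightarrow> (('n \<Rightarrow> nat) \<Rightarrow> 'v set)
    \<Rightarrow> (('n \<Rightarrow> nat) \<Rightarrow> ('n \<Rightarrow> nat) \<Rightarrow> 'v \<Rightarrow> 'v) \<Rightarrow> bool" where
  "graded_module scale C act \<longleftrightarrow>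
     vector_space scale \<and>
     (\<forall>a. module.subspace scale (C a)) \<and>
     (\<forall>c a x. x \<in> C a \<longrightarrow> act c a x \<in> C (\<lambda>j. a j + c j)) \<and>
     (\<forall>c a x y. x \<in> C a \<longrightarrow> y \<in> C a \<longrightarrow> act c a (x + y) = act c a x + act c a y) \<and>
     (\<forall>c a t x. x \<in> C a \<longrightarrow> act c a (scale t x) = scale t (act c a x)) \<and>
     (\<forall>a x. x \<in> C a \<longrightarrow> act (\<lambda>_. 0) a x = x) \<and>
     (\<forall>c c' a x. x \<in> C a \<longrightarrow>
        act c' (\<lambda>j. a j + c j) (act c a x) = act (\<lambda>j. c j + c' j) a x)"

definition generated_by ::
  "('k::field \<Rightarrow> 'v::ab_group_add \<Rightarrow> 'v) \<Rightarrow> (('n \<Rightarrow> nat) \<Rightarrow> 'v set)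
    \<Rightarrow> (('n \<Rightarrow> nat) \<Rightarrow> ('n \<Rightarrow> nat) \<Rightarrow> 'v \<Rightarrow> 'v) \<Rightarrow> (('n \<Rightarrow> nat) \<times> 'v) set \<Rightarrow> bool" where
  "generated_by scale C act G \<longleftrightarrow>
     (\<forall>(a, v) \<in> G. v \<in> C a) \<and>
     (\<forall>b. C b = module.span scale
              {act (\<lambda>j. b j - a j) a v | a v. (a, v) \<in> G \<and> a \<le> b})"

definition finitely_generated ::
  "('k::field \<Rightarrow> 'v::ab_group_add \<Rightarrow> 'v) \<Rightarrow> (('n \<Rightarrow> nat) \<Rightarrow> 'v set)
    \<Rightarrow> (('n \<Rightarrow> nat) \<Rightarrow> ('n \<Rightarrow> nat) \<Rightarrow> 'v \<Rightarrow> 'v) \<Rightarrow> bool" where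
  "finitely_generated scale C act \<longleftrightarrow> (\<exists>G. finite G \<and> generated_by scale C act G)"

definition gen_in_squarefree ::
  "('k::field \<Rightarrow> 'v::ab_group_add \<Rightarrow> 'v) \<Rightarrow> (('n \<Rightarrow> nat) \<Rightarrow> 'v set)
    \<Rightarrow> (('n \<Rightarrow> nat) \<Rightarrow> ('n \<Rightarrow> nat) \<Rightarrow> 'v \<Rightarrow> 'v) \<Rightarrow> bool" where
  "gen_in_squarefree scale C act \<longleftrightarrow>
     (\<exists>G. generated_by scale C act G \<and> (\<forall>(a, v) \<in> G. squarefree_deg a))"

text \<open>The graded free module F = (+)_{p < length D} S(-D!p) with basis e_p of degree D!p.
  Its degree-b component has k-basis x^(b - D!p) e_p (D!p <= b); we represent an element
  of it by its coefficient vector v :: nat => 'k (coefficient of x^(b - D!p) e_p at p).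
  In these coordinates multiplication by a monomial is the identity on coefficients.\<close>

definition free_scale :: "'k::field \<Rightarrow> (nat \<Rightarrow> 'k) \<Rightarrow> (nat \<Rightarrow> 'k)" where
  "free_scale t v = (\<lambda>p. t * v p)"

definition free_comp :: "('n \<Rightarrow> nat) list \<Rightarrow> ('n \<Rightarrow> nat) \<Rightarrow> (nat \<Rightarrow> 'k::field) set" where
  "free_comp D b = {v. \<forall>p. v p \<noteq> 0 \<longrightarrow> p < length D \<and> D ! p \<le> b}"

definition free_act :: "('n \<Rightarrow> nat) \<Rightarrow> ('n \<Rightarrow> nat) \<Rightarrow> (nat \<Rightarrow> 'k::field) \<Rightarrow> (nat \<Rightarrow> 'k)" where
  "free_act c a v = v"

text \<open>Differential d_i : F_i -> F_{i-1} given by e_p |-> sum_q c i p q * x^(D i!p - D (i-1)!q) e_q;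
  in the coordinates above it acts on every component by the scalar matrix c i.\<close>

definition dmap :: "(nat \<Rightarrow> ('n \<Rightarrow> nat) list) \<Rightarrow> (nat \<Rightarrow> nat \<Rightarrow> nat \<Rightarrow> 'k::field) \<Rightarrow> nat
    \<Rightarrow> (nat \<Rightarrow> 'k) \<Rightarrow> (nat \<Rightarrow> 'k)" where
  "dmap D c i v = (\<lambda>q. \<Sum>p<length (D i). c i p q * v p)"

definition aug :: "('k::field \<Rightarrow> 'v::ab_group_add \<Rightarrow> 'v)
    \<Rightarrow> (('n \<Rightarrow> nat) \<Rightarrow> ('n \<Rightarrow> nat) \<Rightarrow> 'v \<Rightarrow> 'v) \<Rightarrow> ('n \<Rightarrow> nat) list \<Rightarrow> (nat \<Rightarrow> 'v)
    \<Rightarrow> ('n \<Rightarrow> nat) \<Rightarrow> (nat \<Rightarrow> 'k) \<Rightarrow> 'v" where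
  "aug scale act D0 g b v =
     (\<Sum>p \<in> {p. p < length D0 \<and> D0 ! p \<le> b}.
        scale (v p) (act (\<lambda>j. b j - (D0 ! p) j) (D0 ! p) (g p)))"

text \<open>Minimal N^n-graded free resolution 0 <- M <- F_0 <- F_1 <- ... <- F_r <- 0 of M,
  where F_i has basis degrees D i (F_i = 0 for i > r), d_i has coefficient matrix c i,
  and the augmentation sends e_p to g p.  Exactness is checked degreewise;
  minimality means every d_i (i >= 1) has image in m F_{i-1}, i.e. no unit entries.\<close>

definition min_free_resolution ::
  "('k::field \<Rightarrow> 'v::ab_group_add \<Rightarrow> 'v) \<Rightarrow> (('n \<Rightarrow> nat) \<Rightarrow> 'v set)
    \<Rightarrow> (('n \<Rightarrow> nat) \<Rightarrow> ('n \<Rightarrow> nat) \<Rightarrow> 'v \<Rightarrow> 'v) \<Rightarrow> nat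
    \<Rightarrow> (nat \<Rightarrow> ('n \<Rightarrow> nat) list) \<Rightarrow> (nat \<Rightarrow> nat \<Rightarrow> nat \<Rightarrow> 'k) \<Rightarrow> (nat \<Rightarrow> 'v) \<Rightarrow> bool" where
  "min_free_resolution scale C act r D c g \<longleftrightarrow>
     (\<forall>i > r. D i = []) \<and>
     (\<forall>i p q. 1 \<le> i \<longrightarrow> c i p q \<noteq> 0 \<longrightarrow>
        p < length (D i) \<and> q < length (D (i - 1)) \<and> D (i - 1) ! q \<le> D i ! p) \<and>
     (\<forall>p < length (D 0). g p \<in> C (D 0 ! p)) \<and>
     (\<forall>b. aug scale act (D 0) g b ` free_comp (D 0) b = C b) \<and>
     (\<forall>b. {v \<in> free_comp (D 0) b. aug scale act (D 0) g b v = 0}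
          = dmap D c 1 ` free_comp (D 1) b) \<and>
     (\<forall>i b. 1 \<le> i \<longrightarrow> {v \<in> free_comp (D i) b. dmap D c i v = 0}
          = dmap D c (i + 1) ` free_comp (D (i + 1)) b) \<and>
     (\<forall>i p q. 1 \<le> i \<longrightarrow> p < length (D i) \<longrightarrow> q < length (D (i - 1)) \<longrightarrow>
        D i ! p = D (i - 1) ! q \<longrightarrow> c i p q = 0)"

end

theory Submission
  imports Defs
begin

text \<open>Suppose a basis element e of F_i has non-squarefree degree d, and pick j with d_j \<ge> 2, so
  that every squarefree degree below d is below d - x_j. For i = 0, the image of e in M_d lies in
  x_j M_{d - x_j} because M is generated in squarefree degrees. For i > 1, if F_{i-1} has squarefree
  basis degrees, the cycle d_i(e) is supported on basis elements of degree below d - x_j, and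
  exactness lifts it to degree d - x_j. Either way e agrees, modulo the image of the next
  differential, with an element w of degree d - x_j; then e - w is a boundary whose coefficient
  at e is 1, which minimality forbids.\<close>

definition free_basis :: "nat \<Rightarrow> nat \<Rightarrow> 'k::field" where
  "free_basis p = (\<lambda>q. if q = p then 1 else 0)"

lemma module_free_scale: "module (free_scale :: 'k::field \<Rightarrow> _)"
  by unfold_locales (auto simp: free_scale_def fun_eq_iff algebra_simps)

lemma subspace_free_comp: "module.subspace (free_scale :: 'k::field \<Rightarrow> _) (free_comp D b)"
  unfolding module.subspace_def[OF module_free_scale]
  by (auto simp: free_comp_def free_scale_def) (metis add.left_neutral)+

lemma free_comp_mono: "b \<le> b' \<Longrightarrow> free_comp D b \<subseteq> free_comp D b'"
  by (auto simp: free_comp_def intro: order_trans)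

lemma free_basis_in_free_comp: "p < length D \<Longrightarrow> free_basis p \<in> free_comp D (D ! p)"
  by (auto simp: free_comp_def free_basis_def)

lemma sum_apply: "(\<Sum>x\<in>A. f x) y = (\<Sum>x\<in>A. f x y)"
  by (induction A rule: infinite_finite_induct) auto

lemma free_comp_eq_sum_basis:
  assumes "v \<in> (free_comp D b :: (nat \<Rightarrow> 'k::field) set)"
  shows "v = (\<Sum>q | q < length D \<and> D ! q \<le> b. free_scale (v q) (free_basis q))"
proof
  fix x
  have "(\<Sum>q | q < length D \<and> D ! q \<le> b. free_scale (v q) (free_basis q)) x
      = (\<Sum>q | q < length D \<and> D ! q \<le> b. if q = x then v q else 0)"
    by (simp add: sum_apply free_scale_def free_basis_def if_distrib cong: if_cong)
  also have "\<dots> = v x"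
    using assms by (auto simp: free_comp_def)
  finally show "v x = (\<Sum>q | q < length D \<and> D ! q \<le> b. free_scale (v q) (free_basis q)) x" ..
qed

lemma generated_by_free_basis:
  "generated_by (free_scale :: 'k::field \<Rightarrow> _) (free_comp D) free_act
     {(D ! q, free_basis q) | q. q < length D}"
  unfolding generated_by_def
proof (intro conjI allI)
  show "\<forall>(a, v) \<in> {(D ! q, free_basis q :: nat \<Rightarrow> 'k) | q. q < length D}. v \<in> free_comp D a"
    using free_basis_in_free_comp by blast
  fix b
  let ?S = "{free_act (\<lambda>j. b j - a j) a v | a v.
              (a, v) \<in> {(D ! q, free_basis q :: nat \<Rightarrow> 'k) | q. q < length D} \<and> a \<le> b}"
  have S: "?S = {free_basis q | q. q < length D \<and> D ! q \<le> b}"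
    by (auto simp: free_act_def)
  show "free_comp D b = module.span free_scale ?S"
  proof
    show "free_comp D b \<subseteq> module.span free_scale ?S"
    proof
      fix v :: "nat \<Rightarrow> 'k" assume "v \<in> free_comp D b"
      then have "v = (\<Sum>q | q < length D \<and> D ! q \<le> b. free_scale (v q) (free_basis q))"
        by (rule free_comp_eq_sum_basis)
      also have "\<dots> \<in> module.span free_scale ?S"
        unfolding S
        by (intro module.span_sum[OF module_free_scale] module.span_scale[OF module_free_scale]
            module.span_base[OF module_free_scale]) auto
      finally show "v \<in> module.span free_scale ?S" .
    qed
    show "module.span free_scale ?S \<subseteq> free_comp D b"
      unfolding S using subspace_free_comp
      by (intro module.span_minimal[OF module_free_scale])
         (auto simp: free_comp_def free_basis_def split: if_splits)
  qed
qed

lemma free_basis_degree_generator: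
  assumes G: "generated_by (free_scale :: 'k::field \<Rightarrow> _) (free_comp D) free_act G"
    and p: "p < length D"
  shows "\<exists>v. (D ! p, v) \<in> G"
proof (rule ccontr)
  assume no_gen: "\<nexists>v. (D ! p, v) \<in> G"
  let ?S = "{free_act (\<lambda>j. (D ! p) j - a j) a v | a v. (a, v) \<in> G \<and> a \<le> D ! p}"
  have "?S \<subseteq> {f. f p = 0}"
  proof
    fix f assume "f \<in> ?S"
    then obtain a where a: "(a, f) \<in> G" "a \<le> D ! p" by (auto simp: free_act_def)
    with G have "f \<in> free_comp D a" by (auto simp: generated_by_def)
    with a no_gen show "f \<in> {f. f p = 0}"
      by (auto simp: free_comp_def dest: antisym)
  qed
  moreover have "module.subspace (free_scale :: 'k \<Rightarrow> _) {f. f p = 0}"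
    unfolding module.subspace_def[OF module_free_scale] by (auto simp: free_scale_def)
  ultimately have "module.span free_scale ?S \<subseteq> {f :: nat \<Rightarrow> 'k. f p = 0}"
    by (rule module.span_minimal[OF module_free_scale])
  moreover have "(free_basis p :: nat \<Rightarrow> 'k) \<in> module.span free_scale ?S"
    using G free_basis_in_free_comp[OF p] unfolding generated_by_def by blast
  ultimately show False by (auto simp: free_basis_def)
qed

lemma gen_in_squarefree_free_iff:
  "gen_in_squarefree (free_scale :: 'k::field \<Rightarrow> _) (free_comp D) free_act
     \<longleftrightarrow> (\<forall>a \<in> set D. squarefree_deg a)"
proof
  assume "gen_in_squarefree (free_scale :: 'k \<Rightarrow> _) (free_comp D) free_act"
  then obtain G where "generated_by (free_scale :: 'k \<Rightarrow> _) (free_comp D) free_act G"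
    and "\<forall>(a, v) \<in> G. squarefree_deg a"
    by (auto simp: gen_in_squarefree_def)
  then show "\<forall>a \<in> set D. squarefree_deg a"
    by (fastforce simp: in_set_conv_nth dest: free_basis_degree_generator)
next
  assume "\<forall>a \<in> set D. squarefree_deg a"
  then show "gen_in_squarefree (free_scale :: 'k \<Rightarrow> _) (free_comp D) free_act"
    unfolding gen_in_squarefree_def using generated_by_free_basis by fastforce
qed

lemma not_squarefree_degE:
  assumes "\<not> squarefree_deg d"
  obtains d' where "d' < d" "\<And>a. squarefree_deg a \<Longrightarrow> a \<le> d \<Longrightarrow> a \<le> d'"
proof -
  from assms obtain j where j: "d j \<ge> 2"
    unfolding squarefree_deg_def by (metis not_le one_add_one Suc_leI Suc_eq_plus1)
  define d' where "d' = d(j := d j - 1)"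
  have "d' < d"
    using j by (auto simp: d'_def less_fun_def le_fun_def intro!: exI[of _ j])
  moreover have "a \<le> d'" if "squarefree_deg a" "a \<le> d" for a
    using that j by (auto simp: d'_def le_fun_def squarefree_deg_def intro: le_trans)
  ultimately show thesis using that by blast
qed

lemma min_resolution_boundary_coord_zero:
  assumes R: "min_free_resolution scale C act r D c g"
    and p: "p < length (D k)"
    and u: "u \<in> free_comp (D (Suc k)) (D k ! p)"
  shows "dmap D c (Suc k) u p = 0"
  unfolding dmap_def
proof (rule sum.neutral, rule ballI)
  fix s assume s: "s \<in> {..<length (D (Suc k))}"
  show "c (Suc k) s p * u s = 0"
  proof (rule ccontr)
    assume "c (Suc k) s p * u s \<noteq> 0"
    then have c_nz: "c (Suc k) s p \<noteq> 0" and "u s \<noteq> 0" by auto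
    with u have "D (Suc k) ! s \<le> D k ! p" by (auto simp: free_comp_def)
    moreover from R c_nz have "D k ! p \<le> D (Suc k) ! s"
      unfolding min_free_resolution_def by (metis diff_Suc_1 le_add1 plus_1_eq_Suc)
    ultimately have "D (Suc k) ! s = D (Suc k - 1) ! p" by simp
    with R s p have "c (Suc k) s p = 0"
      unfolding min_free_resolution_def by (metis diff_Suc_1 lessThan_iff le_add1 plus_1_eq_Suc)
    with c_nz show False ..
  qed
qed

text \<open>Otherwise e_p - w would be a boundary of degree D k ! p with p-th coordinate 1.\<close>

lemma min_resolution_basis_not_equiv_lower:
  fixes \<phi> :: "(nat \<Rightarrow> 'k::field) \<Rightarrow> 'b::ab_group_add"
    and c :: "nat \<Rightarrow> nat \<Rightarrow> nat \<Rightarrow> 'k"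
  assumes R: "min_free_resolution scale C act r D c g"
    and p: "p < length (D k)"
    and ker: "{v \<in> free_comp (D k) (D k ! p). \<phi> v = 0}
              = dmap D c (Suc k) ` free_comp (D (Suc k)) (D k ! p)"
    and \<phi>_diff: "\<And>v w. \<phi> (v - w) = \<phi> v - \<phi> w"
    and w: "w \<in> free_comp (D k) d'" "d' < D k ! p"
    and \<phi>_eq: "\<phi> w = \<phi> (free_basis p)"
  shows False
proof -
  have "w \<in> free_comp (D k) (D k ! p)" using w free_comp_mono less_imp_le by blast
  then have "free_basis p - w \<in> free_comp (D k) (D k ! p)"
    using free_basis_in_free_comp[OF p]
    by (intro module.subspace_diff[OF module_free_scale subspace_free_comp])
  moreover have "\<phi> (free_basis p - w) = 0" using \<phi>_diff \<phi>_eq by simp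
  ultimately obtain u where u: "u \<in> free_comp (D (Suc k)) (D k ! p)"
    and "free_basis p - w = dmap D c (Suc k) u"
    using ker by blast
  moreover have "w p = 0" using w by (auto simp: free_comp_def)
  ultimately have "dmap D c (Suc k) u p = 1" by (metis diff_zero fun_diff_def free_basis_def)
  with min_resolution_boundary_coord_zero[OF R p u] show False by simp
qed

lemma dmap_diff: "dmap D c i (v - w) = dmap D c i v - dmap D c i w"
  by (simp add: dmap_def fun_eq_iff right_diff_distrib sum_subtractf)

lemma min_resolution_squarefree_Suc:
  fixes c :: "nat \<Rightarrow> nat \<Rightarrow> nat \<Rightarrow> 'k::field"
  assumes R: "min_free_resolution scale C act r D c g"
    and i: "1 \<le> i"
    and sq: "\<forall>a \<in> set (D i). squarefree_deg a"
  shows "\<forall>a \<in> set (D (Suc i)). squarefree_deg a"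
proof (rule ccontr)
  assume "\<not> ?thesis"
  then obtain p where p: "p < length (D (Suc i))" and ns: "\<not> squarefree_deg (D (Suc i) ! p)"
    by (auto simp: in_set_conv_nth)
  define d where "d = D (Suc i) ! p"
  obtain d' where d': "d' < d" "\<And>a. squarefree_deg a \<Longrightarrow> a \<le> d \<Longrightarrow> a \<le> d'"
    using not_squarefree_degE ns unfolding d_def by blast
  have exact: "\<And>i b. 1 \<le> i \<Longrightarrow> {v \<in> free_comp (D i) b. dmap D c i v = 0}
                 = dmap D c (Suc i) ` free_comp (D (Suc i)) b"
    using R unfolding min_free_resolution_def by simp
  define v where "v = dmap D c (Suc i) (free_basis p)"
  have v_cycle: "v \<in> free_comp (D i) d" "dmap D c i v = 0"
    using exact[OF i, of d] free_basis_in_free_comp[OF p] unfolding v_def d_def by auto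
  have "v \<in> free_comp (D i) d'"
    using v_cycle(1) sq d'(2) by (auto simp: free_comp_def)
  with v_cycle(2) have "v \<in> dmap D c (Suc i) ` free_comp (D (Suc i)) d'"
    unfolding exact[OF i, symmetric] by blast
  then obtain w where w: "w \<in> free_comp (D (Suc i)) d'" "dmap D c (Suc i) w = v"
    by blast
  have ker: "{x \<in> free_comp (D (Suc i)) d. dmap D c (Suc i) x = 0}
             = dmap D c (Suc (Suc i)) ` free_comp (D (Suc (Suc i))) d"
    using exact[of "Suc i" d] by simp
  show False
    using min_resolution_basis_not_equiv_lower[where \<phi> = "dmap D c (Suc i)",
        OF R p ker[unfolded d_def] dmap_diff w(1) d'(1)[unfolded d_def]] w(2)
    unfolding v_def by simp
qed

lemma graded_module_imp_module: "graded_module scale C act \<Longrightarrow> module scale"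
  by (simp add: graded_module_def vector_space_def module_def)

lemma graded_module_shift_mem:
  assumes "graded_module scale C act" "x \<in> C a" "a \<le> b"
  shows "act (\<lambda>j. b j - a j) a x \<in> C b"
proof -
  have "act (\<lambda>j. b j - a j) a x \<in> C (\<lambda>j. a j + (b j - a j))"
    using assms(1,2) by (simp add: graded_module_def)
  also have "(\<lambda>j. a j + (b j - a j)) = b"
    using assms(3) by (auto simp: le_fun_def)
  finally show ?thesis .
qed

lemma graded_module_shift_shift:
  assumes GM: "graded_module scale C act" and "x \<in> C a" "a \<le> b" "b \<le> b'"
  shows "act (\<lambda>j. b' j - b j) b (act (\<lambda>j. b j - a j) a x) = act (\<lambda>j. b' j - a j) a x"
proof -
  have b: "b = (\<lambda>j. a j + (b j - a j))"
    using assms(3) by (auto simp: le_fun_def)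
  have "act (\<lambda>j. b' j - b j) b (act (\<lambda>j. b j - a j) a x)
      = act (\<lambda>j. (b j - a j) + (b' j - b j)) a x"
    using GM assms(2) by (subst b) (simp add: graded_module_def)
  also have "(\<lambda>j. (b j - a j) + (b' j - b j)) = (\<lambda>j. b' j - a j)"
    using assms(3,4) by (auto simp: le_fun_def fun_eq_iff intro: le_trans)
  finally show ?thesis .
qed

lemma graded_module_act_zero:
  assumes GM: "graded_module scale C act"
  shows "act c a 0 = 0"
proof -
  have "0 \<in> C a"
    using GM module.subspace_0[OF graded_module_imp_module[OF GM]]
    by (auto simp: graded_module_def)
  with GM have "act c a (0 + 0) = act c a 0 + act c a 0"
    unfolding graded_module_def by blast
  then show ?thesis by simp
qed

lemma graded_module_act_sum:
  assumes GM: "graded_module scale C act" and "\<And>x. x \<in> A \<Longrightarrow> f x \<in> C a"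
  shows "act c a (sum f A) = (\<Sum>x\<in>A. act c a (f x))"
  using assms(2)
proof (induction A rule: infinite_finite_induct)
  case (insert x F)
  have "sum f F \<in> C a"
    using GM insert by (intro module.subspace_sum[OF graded_module_imp_module[OF GM]])
      (auto simp: graded_module_def)
  with insert GM show ?case by (simp add: graded_module_def)
qed (simp_all add: graded_module_act_zero[OF GM])

lemma graded_module_subspace_act_image:
  assumes GM: "graded_module scale C act"
  shows "module.subspace scale (act c a ` C a)"
proof -
  have M: "module scale" and sub: "module.subspace scale (C a)"
    using GM graded_module_imp_module by (auto simp: graded_module_def)
  show ?thesis
  proof (rule module.subspaceI[OF M])
    show "0 \<in> act c a ` C a"
      using graded_module_act_zero[OF GM] module.subspace_0[OF M sub] by (metis image_eqI)
    show "x + y \<in> act c a ` C a" if "x \<in> act c a ` C a" "y \<in> act c a ` C a" for x y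
    proof -
      from that obtain u w where "u \<in> C a" "w \<in> C a" "x = act c a u" "y = act c a w"
        by blast
      with GM have "x + y = act c a (u + w)" and "u + w \<in> C a"
        using module.subspace_add[OF M sub] by (auto simp: graded_module_def)
      then show ?thesis by blast
    qed
    show "scale t x \<in> act c a ` C a" if "x \<in> act c a ` C a" for t x
    proof -
      from that obtain u where "u \<in> C a" "x = act c a u" by blast
      with GM have "scale t x = act c a (scale t u)" and "scale t u \<in> C a"
        using module.subspace_scale[OF M sub] by (auto simp: graded_module_def)
      then show ?thesis by blast
    qed
  qed
qed

lemma generated_by_component_subset_act_image:
  assumes GM: "graded_module scale C act" and G: "generated_by scale C act G"
    and below: "\<And>a v. (a, v) \<in> G \<Longrightarrow> a \<le> d \<Longrightarrow> a \<le> d'" and "d' \<le> d"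
  shows "C d \<subseteq> act (\<lambda>j. d j - d' j) d' ` C d'"
proof -
  have "act (\<lambda>j. d j - a j) a v \<in> act (\<lambda>j. d j - d' j) d' ` C d'"
    if av: "(a, v) \<in> G" "a \<le> d" for a v
  proof -
    have v: "v \<in> C a" using G av(1) by (auto simp: generated_by_def)
    have "act (\<lambda>j. d j - a j) a v = act (\<lambda>j. d j - d' j) d' (act (\<lambda>j. d' j - a j) a v)"
      using graded_module_shift_shift[OF GM v below[OF av] \<open>d' \<le> d\<close>] by simp
    moreover have "act (\<lambda>j. d' j - a j) a v \<in> C d'"
      using graded_module_shift_mem[OF GM v below[OF av]] .
    ultimately show ?thesis by blast
  qed
  then have "{act (\<lambda>j. d j - a j) a v | a v. (a, v) \<in> G \<and> a \<le> d}
             \<subseteq> act (\<lambda>j. d j - d' j) d' ` C d'"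
    by blast
  then show ?thesis
    using G module.span_minimal[OF graded_module_imp_module[OF GM] _
        graded_module_subspace_act_image[OF GM]]
    by (simp add: generated_by_def)
qed

lemma aug_diff:
  assumes "module scale"
  shows "aug scale act D0 g b (v - w) = aug scale act D0 g b v - aug scale act D0 g b w"
  unfolding aug_def by (simp add: module.scale_left_diff_distrib[OF assms] sum_subtractf)

lemma aug_free_basis:
  assumes GM: "graded_module scale C act" and p: "p < length D0" and g: "g p \<in> C (D0 ! p)"
  shows "aug scale act D0 g (D0 ! p) (free_basis p) = g p"
proof -
  have M: "module scale" by (rule graded_module_imp_module[OF GM])
  have "aug scale act D0 g (D0 ! p) (free_basis p)
      = (\<Sum>q | q < length D0 \<and> D0 ! q \<le> D0 ! p.
           if q = p then act (\<lambda>j. (D0 ! p) j - (D0 ! q) j) (D0 ! q) (g q) else 0)"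
    unfolding aug_def free_basis_def
    by (rule sum.cong) (simp_all add: module.scale_one[OF M] module.scale_zero_left[OF M])
  also have "\<dots> = act (\<lambda>_. 0) (D0 ! p) (g p)"
    using p by simp
  also have "\<dots> = g p"
    using GM g by (simp add: graded_module_def)
  finally show ?thesis .
qed

lemma aug_act:
  assumes GM: "graded_module scale C act"
    and g: "\<And>p. p < length D0 \<Longrightarrow> g p \<in> C (D0 ! p)"
    and "b \<le> b'" and w: "w \<in> free_comp D0 b"
  shows "act (\<lambda>j. b' j - b j) b (aug scale act D0 g b w) = aug scale act D0 g b' w"
proof -
  have M: "module scale" by (rule graded_module_imp_module[OF GM])
  let ?P = "\<lambda>b. {p. p < length D0 \<and> D0 ! p \<le> b}"
  let ?gen = "\<lambda>b p. act (\<lambda>j. b j - (D0 ! p) j) (D0 ! p) (g p)"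
  have gen_mem: "?gen b p \<in> C b" if "p \<in> ?P b" for p
    using that by (intro graded_module_shift_mem[OF GM] g) auto
  have "act (\<lambda>j. b' j - b j) b (aug scale act D0 g b w)
      = (\<Sum>p\<in>?P b. act (\<lambda>j. b' j - b j) b (scale (w p) (?gen b p)))"
    unfolding aug_def using gen_mem GM
    by (intro graded_module_act_sum[OF GM] module.subspace_scale[OF M])
       (auto simp: graded_module_def)
  also have "\<dots> = (\<Sum>p\<in>?P b. scale (w p) (?gen b' p))"
  proof (rule sum.cong[OF refl])
    fix p assume p: "p \<in> ?P b"
    then show "act (\<lambda>j. b' j - b j) b (scale (w p) (?gen b p)) = scale (w p) (?gen b' p)"
      using GM gen_mem[OF p] graded_module_shift_shift[OF GM g _ \<open>b \<le> b'\<close>]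
      by (simp add: graded_module_def)
  qed
  also have "\<dots> = (\<Sum>p\<in>?P b'. scale (w p) (?gen b' p))"
  proof (rule sum.mono_neutral_left)
    show "?P b \<subseteq> ?P b'" using \<open>b \<le> b'\<close> by (auto intro: order_trans)
    show "\<forall>p\<in>?P b' - ?P b. scale (w p) (?gen b' p) = 0"
      using w module.scale_zero_left[OF M] by (force simp: free_comp_def)
  qed simp
  finally show ?thesis unfolding aug_def .
qed

lemma min_resolution_squarefree_0:
  fixes scale :: "'k::field \<Rightarrow> 'm::ab_group_add \<Rightarrow> 'm"
    and c :: "nat \<Rightarrow> nat \<Rightarrow> nat \<Rightarrow> 'k"
  assumes GM: "graded_module scale C act"
    and SQ: "gen_in_squarefree scale C act"
    and R: "min_free_resolution scale C act r D c g"
  shows "\<forall>a \<in> set (D 0). squarefree_deg a"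
proof (rule ccontr)
  assume "\<not> ?thesis"
  then obtain p where p: "p < length (D 0)" and ns: "\<not> squarefree_deg (D 0 ! p)"
    by (auto simp: in_set_conv_nth)
  define d where "d = D 0 ! p"
  obtain d' where d': "d' < d" "\<And>a. squarefree_deg a \<Longrightarrow> a \<le> d \<Longrightarrow> a \<le> d'"
    using not_squarefree_degE ns unfolding d_def by blast
  obtain G where G: "generated_by scale C act G" and G_sq: "\<forall>(a, v) \<in> G. squarefree_deg a"
    using SQ by (auto simp: gen_in_squarefree_def)
  have g: "\<And>q. q < length (D 0) \<Longrightarrow> g q \<in> C (D 0 ! q)"
    and onto: "\<And>b. aug scale act (D 0) g b ` free_comp (D 0) b = C b"
    and ker: "{v \<in> free_comp (D 0) d. aug scale act (D 0) g d v = 0}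
              = dmap D c (Suc 0) ` free_comp (D (Suc 0)) d"
    using R by (simp_all add: min_free_resolution_def)
  have "C d \<subseteq> act (\<lambda>j. d j - d' j) d' ` C d'"
    using G_sq d' by (intro generated_by_component_subset_act_image[OF GM G]) auto
  then obtain y where y: "y \<in> C d'" "g p = act (\<lambda>j. d j - d' j) d' y"
    using g[OF p] unfolding d_def by blast
  then obtain w where w: "w \<in> free_comp (D 0) d'" "y = aug scale act (D 0) g d' w"
    using onto by blast
  have "aug scale act (D 0) g d w = aug scale act (D 0) g d (free_basis p)"
    using aug_act[OF GM g _ w(1), of d] d'(1) y(2) w(2)
      aug_free_basis[where g = g, OF GM p g[OF p]]
    unfolding d_def by simp
  then show False
    using min_resolution_basis_not_equiv_lower[where \<phi> = "aug scale act (D 0) g (D 0 ! p)",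
        OF R p ker[unfolded d_def] aug_diff[OF graded_module_imp_module[OF GM]] w(1)
        d'(1)[unfolded d_def]]
    unfolding d_def by simp
qed

lemma min_resolution_squarefree_from_1:
  assumes R: "min_free_resolution scale C act r D c g"
    and sq1: "\<forall>a \<in> set (D 1). squarefree_deg a"
    and "1 \<le> i"
  shows "\<forall>a \<in> set (D i). squarefree_deg a"
  using \<open>1 \<le> i\<close>
proof (induction i rule: dec_induct)
  case (step i)
  then show ?case using min_resolution_squarefree_Suc[OF R] by blast
qed (rule sq1)

theorem proposition3p6:
  fixes scale :: "'k::field \<Rightarrow> 'm::ab_group_add \<Rightarrow> 'm"
    and C :: "('n::finite \<Rightarrow> nat) \<Rightarrow> 'm set"
    and act :: "('n \<Rightarrow> nat) \<Rightarrow> ('n \<Rightarrow> nat) \<Rightarrow> 'm \<Rightarrow> 'm"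
    and r :: nat
    and D :: "nat \<Rightarrow> ('n \<Rightarrow> nat) list"
    and c :: "nat \<Rightarrow> nat \<Rightarrow> nat \<Rightarrow> 'k"
    and g :: "nat \<Rightarrow> 'm"
  assumes "graded_module scale C act"
    and "finitely_generated scale C act"
    and "gen_in_squarefree scale C act"
    and "min_free_resolution scale C act r D c g"
  shows "gen_in_squarefree (free_scale :: 'k \<Rightarrow> _) (free_comp (D 1)) free_act \<longleftrightarrow>
         (\<forall>i \<le> r. gen_in_squarefree (free_scale :: 'k \<Rightarrow> _) (free_comp (D i)) free_act)"
proof
  assume "gen_in_squarefree (free_scale :: 'k \<Rightarrow> _) (free_comp (D 1)) free_act"
  then have sq1: "\<forall>a \<in> set (D 1). squarefree_deg a"
    by (simp add: gen_in_squarefree_free_iff)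
  have "\<forall>a \<in> set (D i). squarefree_deg a" for i
  proof (cases "i = 0")
    case True
    then show ?thesis using min_resolution_squarefree_0[OF assms(1,3,4)] by simp
  next
    case False
    then show ?thesis using min_resolution_squarefree_from_1[OF assms(4) sq1, of i] by simp
  qed
  then show "\<forall>i \<le> r. gen_in_squarefree (free_scale :: 'k \<Rightarrow> _) (free_comp (D i)) free_act"
    by (simp add: gen_in_squarefree_free_iff)
next
  assume all: "\<forall>i \<le> r. gen_in_squarefree (free_scale :: 'k \<Rightarrow> _) (free_comp (D i)) free_act"
  show "gen_in_squarefree (free_scale :: 'k \<Rightarrow> _) (free_comp (D 1)) free_act"
  proof (cases "1 \<le> r")
    case False
    with assms(4) have "D 1 = []" by (simp add: min_free_resolution_def)
    then show ?thesis by (simp add: gen_in_squarefree_free_iff)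
  qed (use all in blast)
qed

end
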